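(* Let $\alpha\in(1/2,1)$, $\beta\in(0,1)$, $c\in\mathbb{R}$, and define $\varphi(x)=|x|^{-\beta}$ for $x<-1$ and $\varphi(x)=1$ for $x\ge -1$. Then, as $x\to-\infty$, $$(-\partial_{xx})^\alpha\varphi(x)+c\,\varphi'(x)=-\frac{c_\alpha}{2\alpha\,|x|^{2\alpha}}+\frac{c\,\beta}{|x|^{\beta+1}}+O\!\left(\frac{1}{|x|^{\beta+2\alpha}}\right).$$
   Context: $(-\partial_{xx})^\alpha u(x)=c_\alpha\,\mathrm{PV}\!\int_{\mathbb{R}}\frac{u(x)-u(z)}{|x-z|^{1+2\alpha}}\,dz$, where $c_\alpha>0$ is the normalizing constant of the fractional Laplacian (Fourier symbol $|\xi|^{2\alpha}$) and PV is the Cauchy principal value. *)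

theory Defs
  imports "HOL-Analysis.Analysis" "HOL-Library.Landau_Symbols"
begin

text \<open>Normalizing constant of the one-dimensional fractional Laplacian with
 Fourier symbol |xi|^(2 alpha): c = 4^alpha Gamma(1/2+alpha) / (sqrt pi |Gamma(-alpha)|).\<close>
definition frac_const :: "real \<Rightarrow> real" where
  "frac_const \<alpha> = 4 powr \<alpha> * Gamma (1/2 + \<alpha>) / (sqrt pi * \<bar>Gamma (- \<alpha>)\<bar>)"

definition frac_trunc :: "real \<Rightarrow> (real \<Rightarrow> real) \<Rightarrow> real \<Rightarrow> real \<Rightarrow> real" where
  "frac_trunc \<alpha> u x \<epsilon> =
     (LINT z:{z. \<epsilon> < \<bar>x - z\<bar>}|lborel. (u x - u z) / \<bar>x - z\<bar> powr (1 + 2 * \<alpha>))"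

definition frac_pv_exists :: "real \<Rightarrow> (real \<Rightarrow> real) \<Rightarrow> real \<Rightarrow> bool" where
  "frac_pv_exists \<alpha> u x \<longleftrightarrow>
     (\<forall>\<epsilon>>0. set_integrable lborel {z. \<epsilon> < \<bar>x - z\<bar>}
                 (\<lambda>z. (u x - u z) / \<bar>x - z\<bar> powr (1 + 2 * \<alpha>)))
     \<and> (\<exists>L. (frac_trunc \<alpha> u x \<longlongrightarrow> L) (at_right 0))"

definition frac_lap :: "real \<Rightarrow> (real \<Rightarrow> real) \<Rightarrow> real \<Rightarrow> real" where
  "frac_lap \<alpha> u x = frac_const \<alpha> * Lim (at_right 0) (frac_trunc \<alpha> u x)"

end

theory Submission
  imports Defs
begin

(* Fix x <= -4, write R = |x| and d = R/2.  The principal value integral of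
   f(z) = (phi x - phi z) / |x - z| powr (1 + 2 alpha) is split into five regions:
     (-inf, x-d)    : |f| <= R^-beta (x-z)^(-1-2 alpha), contributing O(R^-(beta+2 alpha));
     (x-d, x+d)     : phi is smooth there; subtracting the odd term phi'(x)(z-x)/|x-z|^(1+2 alpha),
                      whose symmetric truncated integrals cancel, leaves h with
                      |h z| <= M |z-x|^(1-2 alpha) (second-order Taylor bound), which is integrable
                      near x; this gives existence of the principal value and a bound O(R^-(beta+2 alpha));
     (x+d, -1)      : |f| <= d^(-1-2 alpha) (-z)^-beta, again O(R^-(beta+2 alpha));
     (-1, inf)      : phi = 1, computed exactly: (R^-beta - 1)(R-1)^(-2 alpha)/(2 alpha),
                      which is -R^(-2 alpha)/(2 alpha) + O(R^-(beta+2 alpha)). *)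

section \<open>Integrals of powers\<close>

lemma powr_div_powr_one_plus:
  fixes w q :: real
  assumes "0 < w"
  shows "w / w powr (1 + q) = w powr (-q)"
proof -
  have "w powr (-q) = w powr 1 / w powr (1 + q)"
    by (subst powr_diff[symmetric]) simp
  then show ?thesis using assms by simp
qed

lemma set_integral_FTC_nonneg:
  fixes f F :: "real \<Rightarrow> real" and a b :: ereal
  assumes "a < b"
    and "\<And>t. t \<in> einterval a b \<Longrightarrow> DERIV F t :> f t"
    and "\<And>t. t \<in> einterval a b \<Longrightarrow> isCont f t"
    and "\<And>t. t \<in> einterval a b \<Longrightarrow> 0 \<le> f t"
    and "((F \<circ> real_of_ereal) \<longlongrightarrow> A) (at_right a)" "((F \<circ> real_of_ereal) \<longlongrightarrow> B) (at_left b)"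
  shows "set_integrable lborel (einterval a b) f" "(LINT t:einterval a b|lborel. f t) = B - A"
proof -
  note ftc = interval_integral_FTC_nonneg[OF assms(1) _ _ _ assms(5,6)]
  show "set_integrable lborel (einterval a b) f"
    using ftc(1) assms(2-4) by (auto simp: einterval_iff)
  have "(LBINT t=a..b. f t) = B - A"
    using ftc(2) assms(2-4) by (auto simp: einterval_iff)
  then show "(LINT t:einterval a b|lborel. f t) = B - A"
    using less_imp_le[OF assms(1)] by (simp add: interval_lebesgue_integral_def)
qed

lemma powr_integral_right_tail:
  fixes x d q :: real
  assumes q: "0 < q" and d: "0 < d"
  shows "set_integrable lborel {x+d<..} (\<lambda>z. (z-x) powr (-(1+q)))"
    "(LINT z:{x+d<..}|lborel. (z-x) powr (-(1+q))) = d powr (-q) / q"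
proof -
  let ?F = "\<lambda>z. - ((z-x) powr (-q)) / q"
  have D: "DERIV ?F t :> (t-x) powr (-(1+q))" if "x+d < t" for t
  proof -
    have "DERIV ?F t :> (t-x) powr (-q-1)"
      using that q d by (auto intro!: derivative_eq_intros)
    moreover have "(t-x) powr (-q-1) = (t-x) powr (-(1+q))"
      by (rule arg_cong[where f="(powr) (t-x)"]) simp
    ultimately show ?thesis by (simp only:)
  qed
  have "LIM z at_top. -x + z :> at_top"
    by (rule filterlim_tendsto_add_at_top[OF tendsto_const filterlim_ident])
  then have "((\<lambda>z. (z-x) powr (-q)) \<longlongrightarrow> 0) at_top"
    using q by (intro tendsto_neg_powr) simp_all
  from tendsto_minus[OF tendsto_divide_zero[OF this, of q]]
  have top: "(?F \<longlongrightarrow> 0) at_top" by simp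
  have left: "(?F \<longlongrightarrow> - (d powr (-q)) / q) (at_right (x+d))"
    using d q by (auto intro!: tendsto_eq_intros)
  have "set_integrable lborel (einterval (x+d) \<infinity>) (\<lambda>z. (z-x) powr (-(1+q)))
    \<and> (LINT z:einterval (x+d) \<infinity>|lborel. (z-x) powr (-(1+q))) = 0 - (- (d powr (-q)) / q)"
    by (intro conjI set_integral_FTC_nonneg)
      (use D d left top in \<open>auto intro!: continuous_intros simp: ereal_tendsto_simps1\<close>)
  then show "set_integrable lborel {x+d<..} (\<lambda>z. (z-x) powr (-(1+q)))"
    "(LINT z:{x+d<..}|lborel. (z-x) powr (-(1+q))) = d powr (-q) / q"
    by simp_all
qed

lemma powr_integral_left_tail:
  fixes x d q :: real
  assumes q: "0 < q" and d: "0 < d"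
  shows "set_integrable lborel {..<x-d} (\<lambda>z. (x-z) powr (-(1+q)))"
    "(LINT z:{..<x-d}|lborel. (x-z) powr (-(1+q))) = d powr (-q) / q"
proof -
  let ?F = "\<lambda>z. ((x-z) powr (-q)) / q"
  have D: "DERIV ?F t :> (x-t) powr (-(1+q))" if "t < x-d" for t
  proof -
    have "DERIV ?F t :> (x-t) powr (-q-1)"
      using that q d by (auto intro!: derivative_eq_intros)
    moreover have "(x-t) powr (-q-1) = (x-t) powr (-(1+q))"
      by (rule arg_cong[where f="(powr) (x-t)"]) simp
    ultimately show ?thesis by (simp only:)
  qed
  have "LIM z at_bot. x + (- z) :> at_top"
    by (rule filterlim_tendsto_add_at_top[OF tendsto_const filterlim_uminus_at_top_at_bot])
  then have "((\<lambda>z. (x-z) powr (-q)) \<longlongrightarrow> 0) at_bot"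
    using q by (intro tendsto_neg_powr) simp_all
  then have bot: "(?F \<longlongrightarrow> 0) at_bot"
    by (rule tendsto_divide_zero)
  have right: "(?F \<longlongrightarrow> d powr (-q) / q) (at_left (x-d))"
    using d q by (auto intro!: tendsto_eq_intros)
  have "set_integrable lborel (einterval (-\<infinity>) (x-d)) (\<lambda>z. (x-z) powr (-(1+q)))
    \<and> (LINT z:einterval (-\<infinity>) (x-d)|lborel. (x-z) powr (-(1+q))) = d powr (-q) / q - 0"
    by (intro conjI set_integral_FTC_nonneg)
      (use D d bot right in \<open>auto intro!: continuous_intros simp: ereal_tendsto_simps1\<close>)
  then show "set_integrable lborel {..<x-d} (\<lambda>z. (x-z) powr (-(1+q)))"
    "(LINT z:{..<x-d}|lborel. (x-z) powr (-(1+q))) = d powr (-q) / q"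
    by simp_all
qed

lemma powr_integral_near_right:
  fixes x d e q :: real
  assumes q: "q \<noteq> -1" and ed: "0 \<le> e" "e < d" and integrable: "0 < e \<or> -1 < q"
  shows "set_integrable lborel {x+e<..<x+d} (\<lambda>z. (z-x) powr q)"
    "(LINT z:{x+e<..<x+d}|lborel. (z-x) powr q) = (d powr (q+1) - e powr (q+1)) / (q+1)"
proof -
  let ?F = "\<lambda>z. ((z-x) powr (q+1)) / (q+1)"
  have q1: "q + 1 \<noteq> 0" using q by linarith
  have D: "DERIV ?F t :> (t-x) powr q" if "x+e < t" for t
    using that q1 ed by (auto intro!: derivative_eq_intros)
  have right: "(?F \<longlongrightarrow> (d powr (q+1)) / (q+1)) (at_left (x+d))"
    using ed q1 by (auto intro!: tendsto_eq_intros)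
  have left: "(?F \<longlongrightarrow> (e powr (q+1)) / (q+1)) (at_right (x+e))"
  proof (cases "e = 0")
    case True
    with integrable have "0 < q + 1" by auto
    have "((\<lambda>z. (z-x) powr (q+1)) \<longlongrightarrow> 0) (at_right x)"
      by (rule tendsto_zero_powrI)
        (auto intro!: tendsto_eq_intros \<open>0 < q+1\<close> simp: eventually_at_right_less eventually_at_filter)
    from tendsto_divide[OF this tendsto_const[of "q+1"]] q1 True show ?thesis by simp
  next
    case False
    then show ?thesis using ed q1 by (auto intro!: tendsto_eq_intros)
  qed
  have "set_integrable lborel (einterval (x+e) (x+d)) (\<lambda>z. (z-x) powr q)
    \<and> (LINT z:einterval (x+e) (x+d)|lborel. (z-x) powr q) = d powr (q+1) / (q+1) - e powr (q+1) / (q+1)"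
    by (intro conjI set_integral_FTC_nonneg)
      (use D ed left right in \<open>auto intro!: continuous_intros simp: ereal_tendsto_simps1\<close>)
  then show "set_integrable lborel {x+e<..<x+d} (\<lambda>z. (z-x) powr q)"
    "(LINT z:{x+e<..<x+d}|lborel. (z-x) powr q) = (d powr (q+1) - e powr (q+1)) / (q+1)"
    by (simp_all add: diff_divide_distrib)
qed

lemma powr_integral_near_left:
  fixes x d e q :: real
  assumes q: "q \<noteq> -1" and ed: "0 \<le> e" "e < d" and integrable: "0 < e \<or> -1 < q"
  shows "set_integrable lborel {x-d<..<x-e} (\<lambda>z. (x-z) powr q)"
    "(LINT z:{x-d<..<x-e}|lborel. (x-z) powr q) = (d powr (q+1) - e powr (q+1)) / (q+1)"
proof -
  let ?F = "\<lambda>z. - ((x-z) powr (q+1)) / (q+1)"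
  have q1: "q + 1 \<noteq> 0" using q by linarith
  have D: "DERIV ?F t :> (x-t) powr q" if "t < x-e" for t
    using that q1 ed by (auto intro!: derivative_eq_intros)
  have left: "(?F \<longlongrightarrow> - (d powr (q+1)) / (q+1)) (at_right (x-d))"
    using ed q1 by (auto intro!: tendsto_eq_intros)
  have right: "(?F \<longlongrightarrow> - (e powr (q+1)) / (q+1)) (at_left (x-e))"
  proof (cases "e = 0")
    case True
    with integrable have "0 < q + 1" by auto
    have "((\<lambda>z. (x-z) powr (q+1)) \<longlongrightarrow> 0) (at_left x)"
      by (rule tendsto_zero_powrI)
        (auto intro!: tendsto_eq_intros \<open>0 < q+1\<close> simp: eventually_at_left_real eventually_at_filter)
    from tendsto_divide[OF tendsto_minus[OF this] tendsto_const[of "q+1"]] q1 True show ?thesis by simp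
  next
    case False
    then show ?thesis using ed q1 by (auto intro!: tendsto_eq_intros)
  qed
  have "set_integrable lborel (einterval (x-d) (x-e)) (\<lambda>z. (x-z) powr q)
    \<and> (LINT z:einterval (x-d) (x-e)|lborel. (x-z) powr q) = - (e powr (q+1)) / (q+1) - (- (d powr (q+1)) / (q+1))"
    by (intro conjI set_integral_FTC_nonneg)
      (use D ed left right in \<open>auto intro!: continuous_intros simp: ereal_tendsto_simps1\<close>)
  then show "set_integrable lborel {x-d<..<x-e} (\<lambda>z. (x-z) powr q)"
    "(LINT z:{x-d<..<x-e}|lborel. (x-z) powr q) = (d powr (q+1) - e powr (q+1)) / (q+1)"
    by (simp_all add: diff_divide_distrib)
qed

section \<open>Set integrals: splitting and domination\<close>

lemma set_integral_singleton:
  fixes f :: "real \<Rightarrow> real"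
  shows "set_integrable lborel {b} f" "(LINT z:{b}|lborel. f z) = 0"
proof -
  have eq: "(\<lambda>z. indicator {b} z *\<^sub>R f z) = (\<lambda>z. f b * indicator {b} z)"
    by (auto simp: indicator_def fun_eq_iff)
  show "set_integrable lborel {b} f"
    unfolding set_integrable_def eq by (intro integrable_mult_right integrable_real_indicator) auto
  show "(LINT z:{b}|lborel. f z) = 0"
    unfolding set_lebesgue_integral_def eq by simp
qed

lemma set_integral_einterval_split:
  fixes f :: "real \<Rightarrow> real" and a c :: ereal and b :: real
  assumes "a < b" "b < c"
    and left: "set_integrable lborel (einterval a b) f" and right: "set_integrable lborel (einterval b c) f"
  shows "set_integrable lborel (einterval a c) f"
    "(LINT z:einterval a c|lborel. f z) = (LINT z:einterval a b|lborel. f z) + (LINT z:einterval b c|lborel. f z)"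
proof -
  note point = set_integral_singleton[of b f]
  have split: "einterval a c = (einterval a b \<union> {b}) \<union> einterval b c"
    using assms(1,2) by (auto simp: einterval_iff) (metis less_ereal.simps(1) less_trans)+
  have closed: "set_integrable lborel (einterval a b \<union> {b}) f"
    by (rule set_integrable_Un) (use left point in auto)
  have "(LINT z:einterval a b \<union> {b}|lborel. f z) = (LINT z:einterval a b|lborel. f z)"
    using set_integral_Un[of "einterval a b" "{b}", OF _ left point(1)] point(2)
    by (simp add: einterval_iff)
  moreover have "(einterval a b \<union> {b}) \<inter> einterval b c = {}"
    by (auto simp: einterval_iff)
  ultimately show "set_integrable lborel (einterval a c) f"
    "(LINT z:einterval a c|lborel. f z) = (LINT z:einterval a b|lborel. f z) + (LINT z:einterval b c|lborel. f z)"
    using set_integrable_Un[OF closed right] set_integral_Un[OF _ closed right] split by auto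
qed

lemma set_integral_dominated:
  fixes f g :: "'a \<Rightarrow> real"
  assumes g: "set_integrable M A g" and f: "f \<in> borel_measurable M" and A: "A \<in> sets M"
    and dom: "\<And>z. z \<in> A \<Longrightarrow> \<bar>f z\<bar> \<le> g z"
  shows "set_integrable M A f" "\<bar>LINT z:A|M. f z\<bar> \<le> (LINT z:A|M. g z)"
proof -
  have "set_borel_measurable M A f"
    unfolding set_borel_measurable_def using f A
    by (intro borel_measurable_scaleR borel_measurable_indicator) auto
  then show fi: "set_integrable M A f"
    by (rule set_integrable_bound[OF g]) (use dom in force)
  have "\<bar>LINT z:A|M. f z\<bar> \<le> (LINT z:A|M. \<bar>f z\<bar>)"
    using set_integral_norm_bound[OF fi] by simp
  also have "\<dots> \<le> (LINT z:A|M. g z)"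
    by (rule set_integral_mono[OF set_integrable_abs[OF fi] g]) (use dom in auto)
  finally show "\<bar>LINT z:A|M. f z\<bar> \<le> (LINT z:A|M. g z)" .
qed

section \<open>Mean value and Taylor bounds\<close>

lemma mvt_between:
  fixes f f' :: "real \<Rightarrow> real"
  assumes "\<And>t. t \<in> {a..b} \<Longrightarrow> DERIV f t :> f' t" "u \<in> {a..b}" "v \<in> {a..b}"
  shows "\<exists>w. w \<in> {a..b} \<and> \<bar>w - v\<bar> \<le> \<bar>u - v\<bar> \<and> f u - f v = f' w * (u - v)"
proof (cases u v rule: linorder_cases)
  case less
  obtain w where "u < w" "w < v" "f v - f u = (v - u) * f' w"
    using MVT2[OF less, of f f'] assms by auto
  then show ?thesis using assms by (intro exI[of _ w]) (auto simp: algebra_simps)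
next
  case equal
  then show ?thesis using assms by auto
next
  case greater
  obtain w where "v < w" "w < u" "f u - f v = (u - v) * f' w"
    using MVT2[OF greater, of f f'] assms by auto
  then show ?thesis using assms by (intro exI[of _ w]) (auto simp: algebra_simps)
qed

lemma lipschitz_from_derivative_bound:
  fixes f f' :: "real \<Rightarrow> real"
  assumes "\<And>t. t \<in> {a..b} \<Longrightarrow> DERIV f t :> f' t" "\<And>t. t \<in> {a..b} \<Longrightarrow> \<bar>f' t\<bar> \<le> M"
    and "u \<in> {a..b}" "v \<in> {a..b}"
  shows "\<bar>f u - f v\<bar> \<le> M * \<bar>u - v\<bar>"
proof -
  obtain w where w: "w \<in> {a..b}" "f u - f v = f' w * (u - v)"
    using mvt_between[OF assms(1,3,4)] by blast
  then show ?thesis using assms(2)[OF w(1)] by (simp add: abs_mult mult_right_mono)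
qed

lemma taylor_first_order_bound:
  fixes g g1 g2 :: "real \<Rightarrow> real"
  assumes "\<And>t. t \<in> {a..b} \<Longrightarrow> DERIV g t :> g1 t" "\<And>t. t \<in> {a..b} \<Longrightarrow> DERIV g1 t :> g2 t"
    and "\<And>t. t \<in> {a..b} \<Longrightarrow> \<bar>g2 t\<bar> \<le> M" and "x \<in> {a..b}" "z \<in> {a..b}"
  shows "\<bar>g z - g x - g1 x * (z - x)\<bar> \<le> M * (z - x)^2"
proof -
  obtain w where w: "w \<in> {a..b}" "\<bar>w - x\<bar> \<le> \<bar>z - x\<bar>" "g z - g x = g1 w * (z - x)"
    using mvt_between[OF assms(1,5,4)] by blast
  have lip: "\<bar>g1 w - g1 x\<bar> \<le> M * \<bar>w - x\<bar>"
    using lipschitz_from_derivative_bound[OF assms(2,3) w(1) assms(4)] .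
  have M: "0 \<le> M" using assms(3)[OF assms(4)] by linarith
  have "g z - g x - g1 x * (z - x) = (g1 w - g1 x) * (z - x)"
    using w(3) by (simp add: algebra_simps)
  then have "\<bar>g z - g x - g1 x * (z - x)\<bar> = \<bar>g1 w - g1 x\<bar> * \<bar>z - x\<bar>"
    by (simp add: abs_mult)
  also have "\<dots> \<le> M * \<bar>w - x\<bar> * \<bar>z - x\<bar>"
    using lip by (rule mult_right_mono) simp
  also have "\<dots> \<le> M * \<bar>z - x\<bar> * \<bar>z - x\<bar>"
    using M w(2) by (intro mult_right_mono mult_left_mono) auto
  also have "\<dots> = M * (z - x)^2"
    by (simp add: power2_eq_square abs_mult_self_eq)
  finally show ?thesis .
qed

section \<open>The principal value integral at a fixed far-left point\<close>

locale far_left_point =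
  fixes \<alpha> \<beta> x :: real and \<phi> :: "real \<Rightarrow> real"
  assumes alpha_lower: "1/2 < \<alpha>" and alpha_upper: "\<alpha> < 1"
    and beta_pos: "0 < \<beta>" and beta_upper: "\<beta> < 1"
    and x_far: "x \<le> -4"
    and phi: "\<And>z. \<phi> z = (if z < -1 then \<bar>z\<bar> powr (- \<beta>) else 1)"
begin

text \<open>R = |x|, and d = R/2 is the radius of the neighbourhood of x on which \<phi> is smooth.\<close>
definition "R = -x"
definition "d = R / 2"

text \<open>The principal value integrand f; its correction h by the odd term p (z-x)/|x-z|^(1+2\<alpha>),
  where p = \<phi>'(x); M bounds \<phi>'' on [x-d, x+d]; err = d^-(\<beta>+2\<alpha>) is the size of the error term.\<close>
definition "f z = (\<phi> x - \<phi> z) / \<bar>x - z\<bar> powr (1 + 2 * \<alpha>)"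
definition "p = \<beta> * R powr (-\<beta>-1)"
definition "h z = f z + p * (z - x) / \<bar>x - z\<bar> powr (1 + 2 * \<alpha>)"
definition "M = 2 * d powr (-\<beta>-2)"
definition "err = d powr (-(\<beta>+2*\<alpha>))"

lemma R_ge: "4 \<le> R" and d_ge: "2 \<le> d" and x_eq: "x = -R" and R_eq: "R = 2*d"
  using x_far by (auto simp: R_def d_def)

lemma phi_left: "z < -1 \<Longrightarrow> \<phi> z = (-z) powr (-\<beta>)"
  by (simp add: phi)

lemma phi_x: "\<phi> x = R powr (-\<beta>)"
  using x_far by (simp add: phi R_def)

lemma phi_fun: "\<phi> = (\<lambda>z. if z < -1 then \<bar>z\<bar> powr (- \<beta>) else 1)"
  using phi by auto

lemma f_measurable: "f \<in> borel_measurable lborel"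
  unfolding f_def[abs_def] unfolding phi_fun by measurable

lemma h_measurable: "h \<in> borel_measurable lborel"
  unfolding h_def[abs_def] f_def[abs_def] unfolding phi_fun by measurable

text \<open>Far left region (-\<infinity>, x-d): there 0 \<le> \<phi> z \<le> \<phi> x, so |f| is at most \<phi> x times the kernel.\<close>
lemma far_left_part:
  shows "set_integrable lborel {..<x-d} f"
    "\<bar>LINT z:{..<x-d}|lborel. f z\<bar> \<le> R powr (-\<beta>) * (d powr (-(2*\<alpha>)) / (2*\<alpha>))"
proof -
  let ?g = "\<lambda>z. R powr (-\<beta>) * (x-z) powr (-(1+2*\<alpha>))"
  have "0 < 2*\<alpha>" "0 < d" using alpha_lower d_ge by simp_all
  note kernel = powr_integral_left_tail[OF this, of x]
  have gi: "set_integrable lborel {..<x-d} ?g" using kernel(1) by simp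
  have gv: "(LINT z:{..<x-d}|lborel. ?g z) = R powr (-\<beta>) * (d powr (-(2*\<alpha>)) / (2*\<alpha>))"
    using kernel(2) by simp
  have bound: "\<bar>f z\<bar> \<le> ?g z" if z: "z \<in> {..<x-d}" for z
  proof -
    have z1: "z < -1" "R < -z" "0 < x - z" using z d_ge x_eq R_ge by auto
    have le: "(-z) powr (-\<beta>) \<le> R powr (-\<beta>)"
      using z1 R_ge beta_pos by (intro powr_mono2') auto
    have "\<bar>f z\<bar> = (R powr (-\<beta>) - (-z) powr (-\<beta>)) / (x - z) powr (1 + 2*\<alpha>)"
      unfolding f_def phi_left[OF z1(1)] phi_x using le z1 by simp
    also have "\<dots> \<le> R powr (-\<beta>) / (x - z) powr (1 + 2*\<alpha>)"
      using z1 by (intro divide_right_mono) auto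
    also have "\<dots> = ?g z" by (simp only: powr_minus divide_inverse)
    finally show ?thesis .
  qed
  show "set_integrable lborel {..<x-d} f"
    "\<bar>LINT z:{..<x-d}|lborel. f z\<bar> \<le> R powr (-\<beta>) * (d powr (-(2*\<alpha>)) / (2*\<alpha>))"
    using set_integral_dominated[OF gi f_measurable _ bound] gv by auto
qed

text \<open>Middle region (x+d, -1): here |x-z| \<ge> d and 0 \<le> \<phi> z - \<phi> x \<le> (-z)^-\<beta>.\<close>
lemma middle_part:
  shows "set_integrable lborel {x+d<..<-1} f"
    "\<bar>LINT z:{x+d<..<-1}|lborel. f z\<bar> \<le> d powr (-(1+2*\<alpha>)) * ((d powr (1-\<beta>) - 1) / (1-\<beta>))"
proof -
  let ?g = "\<lambda>z. d powr (-(1+2*\<alpha>)) * (-z) powr (-\<beta>)"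
  have "1 < d" using d_ge by simp
  note T = powr_integral_near_left[of "-\<beta>" 1 d 0, OF _ _ this]
  have xd: "x + d = 0 - d" using x_eq R_eq by simp
  have gi: "set_integrable lborel {x+d<..<-1} ?g"
    unfolding xd using T(1) beta_upper by simp
  have gv: "(LINT z:{x+d<..<-1}|lborel. ?g z) = d powr (-(1+2*\<alpha>)) * ((d powr (1-\<beta>) - 1) / (1-\<beta>))"
    unfolding xd using T(2) beta_upper by simp
  have bound: "\<bar>f z\<bar> \<le> ?g z" if z: "z \<in> {x+d<..<-1}" for z
  proof -
    have z1: "z < -1" "-z < R" "d < z - x" using z d_ge x_eq R_eq by auto
    have le: "R powr (-\<beta>) \<le> (-z) powr (-\<beta>)"
      using z1 R_ge beta_pos by (intro powr_mono2') auto
    have dp: "d powr (1 + 2*\<alpha>) \<le> (z - x) powr (1 + 2*\<alpha>)"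
      using z1 d_ge alpha_lower by (intro powr_mono2) auto
    have "\<bar>f z\<bar> = ((-z) powr (-\<beta>) - R powr (-\<beta>)) / (z - x) powr (1 + 2*\<alpha>)"
      unfolding f_def phi_left[OF z1(1)] phi_x using le z1 d_ge by (simp add: abs_minus_commute)
    also have "\<dots> \<le> (-z) powr (-\<beta>) / (z - x) powr (1 + 2*\<alpha>)"
      using z1 by (intro divide_right_mono) auto
    also have "\<dots> \<le> (-z) powr (-\<beta>) / d powr (1 + 2*\<alpha>)"
      using dp z1 d_ge by (intro divide_left_mono) (auto intro!: mult_pos_pos)
    also have "\<dots> = ?g z" by (simp only: powr_minus divide_inverse mult.commute)
    finally show ?thesis .
  qed
  show "set_integrable lborel {x+d<..<-1} f"
    "\<bar>LINT z:{x+d<..<-1}|lborel. f z\<bar> \<le> d powr (-(1+2*\<alpha>)) * ((d powr (1-\<beta>) - 1) / (1-\<beta>))"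
    using set_integral_dominated[OF gi f_measurable _ bound] gv by auto
qed

text \<open>Right region (-1, \<infinity>): \<phi> = 1 there, so the integral is computed exactly.\<close>
lemma right_part:
  shows "set_integrable lborel {-1<..} f"
    "(LINT z:{-1<..}|lborel. f z) = (R powr (-\<beta>) - 1) * ((R-1) powr (-(2*\<alpha>)) / (2*\<alpha>))"
proof -
  have "0 < 2*\<alpha>" "0 < R - 1" using alpha_lower R_ge by simp_all
  note kernel = powr_integral_right_tail[OF this, of x]
  have xr: "x + (R - 1) = -1" using x_eq by simp
  have eq: "f z = (R powr (-\<beta>) - 1) * (z - x) powr (-(1+2*\<alpha>))" if "z \<in> {-1<..}" for z
  proof -
    have "\<not> z < -1" "\<bar>x - z\<bar> = z - x" using that x_far by auto
    then have "f z = (R powr (-\<beta>) - 1) / (z-x) powr (1+2*\<alpha>)"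
      unfolding f_def phi_x by (simp add: phi)
    then show ?thesis by (simp only: powr_minus divide_inverse)
  qed
  have gi: "set_integrable lborel {-1<..} (\<lambda>z. (R powr (-\<beta>) - 1) * (z - x) powr (-(1+2*\<alpha>)))"
    using kernel(1) unfolding xr by simp
  show "set_integrable lborel {-1<..} f"
    using gi by (rule set_integrable_cong[THEN iffD1, rotated -1]) (auto simp: eq)
  have "(LINT z:{-1<..}|lborel. f z)
      = (LINT z:{-1<..}|lborel. (R powr (-\<beta>) - 1) * (z - x) powr (-(1+2*\<alpha>)))"
    by (rule set_lebesgue_integral_cong) (auto simp: eq)
  also have "\<dots> = (R powr (-\<beta>) - 1) * ((R-1) powr (-(2*\<alpha>)) / (2*\<alpha>))"
    using kernel(2) unfolding xr by simp
  finally show "(LINT z:{-1<..}|lborel. f z) = (R powr (-\<beta>) - 1) * ((R-1) powr (-(2*\<alpha>)) / (2*\<alpha>))" .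
qed

lemma phi_taylor:
  assumes z: "z \<in> {x-d..x+d}"
  shows "\<bar>\<phi> x - \<phi> z + p * (z - x)\<bar> \<le> M * (z - x)^2"
proof -
  let ?g = "\<lambda>t. (-t) powr (-\<beta>)"
  let ?g1 = "\<lambda>t. \<beta> * (-t) powr (-\<beta>-1)"
  let ?g2 = "\<lambda>t. \<beta> * (\<beta>+1) * (-t) powr (-\<beta>-2)"
  have I: "t < 0" "d \<le> -t" if "t \<in> {x-d..x+d}" for t
    using that x_eq R_eq d_ge by auto
  have D1: "DERIV ?g t :> ?g1 t" if "t \<in> {x-d..x+d}" for t
    using I[OF that] by (auto intro!: derivative_eq_intros simp: algebra_simps)
  have D2: "DERIV ?g1 t :> ?g2 t" if "t \<in> {x-d..x+d}" for t
    using I[OF that] by (auto intro!: derivative_eq_intros simp: algebra_simps)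
  have B: "\<bar>?g2 t\<bar> \<le> M" if "t \<in> {x-d..x+d}" for t
  proof -
    have "(-t) powr (-\<beta>-2) \<le> d powr (-\<beta>-2)"
      using I[OF that] d_ge beta_pos by (intro powr_mono2') auto
    moreover have "\<beta> * (\<beta>+1) \<le> 2"
      using mult_mono[of \<beta> 1 \<beta> 1] beta_pos beta_upper by (simp add: distrib_left)
    moreover have "0 \<le> \<beta> * (\<beta>+1)" using beta_pos by simp
    ultimately have "\<beta> * (\<beta>+1) * (-t) powr (-\<beta>-2) \<le> 2 * d powr (-\<beta>-2)"
      by (intro mult_mono) auto
    moreover have "0 \<le> \<beta> * (\<beta>+1) * (-t) powr (-\<beta>-2)"
      using beta_pos by (intro mult_nonneg_nonneg) auto
    ultimately show ?thesis unfolding M_def by linarith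
  qed
  have "x \<in> {x-d..x+d}" using d_ge by auto
  from taylor_first_order_bound[OF D1 D2 B this z]
  have T: "\<bar>?g z - ?g x - ?g1 x * (z - x)\<bar> \<le> M * (z - x)^2" .
  have "\<phi> z = ?g z" using I[OF z] d_ge by (simp add: phi_left)
  moreover have "\<phi> x = ?g x" using x_far by (simp add: phi_left)
  moreover have "?g1 x = p" by (simp add: p_def R_def)
  ultimately have "\<phi> x - \<phi> z + p * (z - x) = - (?g z - ?g x - ?g1 x * (z - x))"
    by simp
  then show ?thesis using T by simp
qed

text \<open>Hence the corrected integrand has an integrable singularity: |h z| \<le> M |z-x|^(1-2\<alpha>).\<close>
lemma h_bound:
  assumes z: "z \<in> {x-d<..<x+d}" "z \<noteq> x"
  shows "\<bar>h z\<bar> \<le> M * \<bar>z - x\<bar> powr (1 - 2*\<alpha>)"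
proof -
  have hz: "h z = (\<phi> x - \<phi> z + p * (z - x)) / \<bar>x - z\<bar> powr (1 + 2*\<alpha>)"
    unfolding h_def f_def by (simp add: add_divide_distrib)
  have pos: "0 < \<bar>x - z\<bar> powr (1 + 2*\<alpha>)" using z by simp
  have "\<bar>h z\<bar> \<le> M * (z - x)^2 / \<bar>x - z\<bar> powr (1 + 2*\<alpha>)"
    unfolding hz abs_divide using phi_taylor[of z] z pos by (auto intro!: divide_right_mono)
  also have "\<dots> = M * \<bar>z - x\<bar> powr (1 - 2*\<alpha>)"
  proof -
    have "(z - x)^2 = \<bar>z - x\<bar> powr 2" using z by (simp add: powr_numeral)
    moreover have "\<bar>z - x\<bar> powr (1 - 2*\<alpha>) = \<bar>z - x\<bar> powr 2 / \<bar>z - x\<bar> powr (1 + 2*\<alpha>)"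
      by (subst powr_diff[symmetric]) simp
    ultimately show ?thesis by (simp add: abs_minus_commute)
  qed
  finally show ?thesis .
qed

lemma h_near_right:
  assumes e: "0 < e" "e \<le> d"
  shows "set_integrable lborel {x<..<x+e} h"
    "\<bar>LINT z:{x<..<x+e}|lborel. h z\<bar> \<le> M * (e powr (2 - 2*\<alpha>) / (2 - 2*\<alpha>))"
proof -
  let ?g = "\<lambda>z. M * (z - x) powr (1 - 2*\<alpha>)"
  have c: "1 - 2*\<alpha> \<noteq> -1" "-1 < 1 - 2*\<alpha>" using alpha_upper by auto
  note kernel = powr_integral_near_right[OF c(1) order_refl e(1), of x]
  have gi: "set_integrable lborel {x<..<x+e} ?g" using kernel(1) c(2) by simp
  have gv: "(LINT z:{x<..<x+e}|lborel. ?g z) = M * (e powr (2 - 2*\<alpha>) / (2 - 2*\<alpha>))"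
    using kernel(2) c(2) by (simp add: algebra_simps)
  have bound: "\<bar>h z\<bar> \<le> ?g z" if z: "z \<in> {x<..<x+e}" for z
    using h_bound[of z] z e d_ge by simp
  show "set_integrable lborel {x<..<x+e} h"
    "\<bar>LINT z:{x<..<x+e}|lborel. h z\<bar> \<le> M * (e powr (2 - 2*\<alpha>) / (2 - 2*\<alpha>))"
    using set_integral_dominated[OF gi h_measurable _ bound] gv by auto
qed

lemma h_near_left:
  assumes e: "0 < e" "e \<le> d"
  shows "set_integrable lborel {x-e<..<x} h"
    "\<bar>LINT z:{x-e<..<x}|lborel. h z\<bar> \<le> M * (e powr (2 - 2*\<alpha>) / (2 - 2*\<alpha>))"
proof -
  let ?g = "\<lambda>z. M * (x - z) powr (1 - 2*\<alpha>)"
  have c: "1 - 2*\<alpha> \<noteq> -1" "-1 < 1 - 2*\<alpha>" using alpha_upper by auto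
  note kernel = powr_integral_near_left[OF c(1) order_refl e(1), of x]
  have gi: "set_integrable lborel {x-e<..<x} ?g" using kernel(1) c(2) by simp
  have gv: "(LINT z:{x-e<..<x}|lborel. ?g z) = M * (e powr (2 - 2*\<alpha>) / (2 - 2*\<alpha>))"
    using kernel(2) c(2) by (simp add: algebra_simps)
  have bound: "\<bar>h z\<bar> \<le> ?g z" if z: "z \<in> {x-e<..<x}" for z
    using h_bound[of z] z e d_ge by (simp add: abs_minus_commute)
  show "set_integrable lborel {x-e<..<x} h"
    "\<bar>LINT z:{x-e<..<x}|lborel. h z\<bar> \<le> M * (e powr (2 - 2*\<alpha>) / (2 - 2*\<alpha>))"
    using set_integral_dominated[OF gi h_measurable _ bound] gv by auto
qed

lemma f_via_h:
  shows "z < x \<Longrightarrow> f z = h z + p * (x-z) powr (-(2*\<alpha>))"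
    and "x < z \<Longrightarrow> f z = h z - p * (z-x) powr (-(2*\<alpha>))"
proof -
  assume z: "z < x"
  have "p * (z - x) / \<bar>x - z\<bar> powr (1 + 2*\<alpha>) = - p * ((x-z) / (x-z) powr (1 + 2*\<alpha>))"
    using z by (simp add: algebra_simps)
  then show "f z = h z + p * (x-z) powr (-(2*\<alpha>))"
    unfolding h_def using powr_div_powr_one_plus[of "x-z" "2*\<alpha>"] z by simp
next
  assume z: "x < z"
  have "p * (z - x) / \<bar>x - z\<bar> powr (1 + 2*\<alpha>) = p * ((z-x) / (z-x) powr (1 + 2*\<alpha>))"
    using z by (simp add: algebra_simps)
  then show "f z = h z - p * (z-x) powr (-(2*\<alpha>))"
    unfolding h_def using powr_div_powr_one_plus[of "z-x" "2*\<alpha>"] z by simp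
qed

text \<open>Away from x, the odd correction term integrates to zero over the symmetric annulus
  e < |z - x| < d, so f and h have the same integral there.\<close>
lemma odd_part_cancels:
  assumes e: "0 < e" "e < d"
  shows "set_integrable lborel {x-d<..<x-e} f" "set_integrable lborel {x+e<..<x+d} f"
    "(LINT z:{x-d<..<x-e}|lborel. f z) + (LINT z:{x+e<..<x+d}|lborel. f z)
     = (LINT z:{x-d<..<x-e}|lborel. h z) + (LINT z:{x+e<..<x+d}|lborel. h z)"
proof -
  have c: "-(2*\<alpha>) \<noteq> -1" using alpha_lower by auto
  note kl = powr_integral_near_left[OF c, of e d x] and kr = powr_integral_near_right[OF c, of e d x]
  have hl: "set_integrable lborel {x-d<..<x-e} h"
    using h_near_left(1)[of d] d_ge e by (rule_tac set_integrable_subset) auto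
  have hr: "set_integrable lborel {x+e<..<x+d} h"
    using h_near_right(1)[of d] d_ge e by (rule_tac set_integrable_subset) auto
  have ol: "set_integrable lborel {x-d<..<x-e} (\<lambda>z. (x-z) powr (-(2*\<alpha>)))" using kl(1) e by simp
  have or: "set_integrable lborel {x+e<..<x+d} (\<lambda>z. (z-x) powr (-(2*\<alpha>)))" using kr(1) e by simp
  have eql: "f z = h z + p * (x-z) powr (-(2*\<alpha>))" if "z \<in> {x-d<..<x-e}" for z
    using f_via_h(1)[of z] that e by simp
  have eqr: "f z = h z - p * (z-x) powr (-(2*\<alpha>))" if "z \<in> {x+e<..<x+d}" for z
    using f_via_h(2)[of z] that e by simp
  show "set_integrable lborel {x-d<..<x-e} f"
    using set_integral_add(1)[OF hl set_integrable_mult_right[OF ol, of p]]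
    by (rule set_integrable_cong[THEN iffD1, rotated -1]) (auto simp: eql)
  show "set_integrable lborel {x+e<..<x+d} f"
    using set_integral_diff(1)[OF hr set_integrable_mult_right[OF or, of p]]
    by (rule set_integrable_cong[THEN iffD1, rotated -1]) (auto simp: eqr)
  have "(LINT z:{x-d<..<x-e}|lborel. f z) = (LINT z:{x-d<..<x-e}|lborel. h z + p * (x-z) powr (-(2*\<alpha>)))"
    by (rule set_lebesgue_integral_cong) (auto simp: eql)
  also have "\<dots> = (LINT z:{x-d<..<x-e}|lborel. h z) + p * (LINT z:{x-d<..<x-e}|lborel. (x-z) powr (-(2*\<alpha>)))"
    using hl ol by (simp add: set_integral_add)
  finally have vl: "(LINT z:{x-d<..<x-e}|lborel. f z) = \<dots>" .
  have "(LINT z:{x+e<..<x+d}|lborel. f z) = (LINT z:{x+e<..<x+d}|lborel. h z - p * (z-x) powr (-(2*\<alpha>)))"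
    by (rule set_lebesgue_integral_cong) (auto simp: eqr)
  also have "\<dots> = (LINT z:{x+e<..<x+d}|lborel. h z) - p * (LINT z:{x+e<..<x+d}|lborel. (z-x) powr (-(2*\<alpha>)))"
    using hr or by (simp add: set_integral_diff)
  finally have vr: "(LINT z:{x+e<..<x+d}|lborel. f z) = \<dots>" .
  have "(LINT z:{x-d<..<x-e}|lborel. (x-z) powr (-(2*\<alpha>))) = (LINT z:{x+e<..<x+d}|lborel. (z-x) powr (-(2*\<alpha>)))"
    using kl(2) kr(2) e by simp
  then show "(LINT z:{x-d<..<x-e}|lborel. f z) + (LINT z:{x+e<..<x+d}|lborel. f z)
     = (LINT z:{x-d<..<x-e}|lborel. h z) + (LINT z:{x+e<..<x+d}|lborel. h z)"
    unfolding vl vr by simp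
qed

definition "I_far = (LINT z:{..<x-d}|lborel. f z)"
definition "I_mid = (LINT z:{x+d<..<-1}|lborel. f z)"
definition "I_right = (LINT z:{-1<..}|lborel. f z)"
definition "H_left = (LINT z:{x-d<..<x}|lborel. h z)"
definition "H_right = (LINT z:{x<..<x+d}|lborel. h z)"
definition "pv_value = I_far + I_mid + I_right + H_left + H_right"

lemma truncated_integral_split:
  assumes e: "0 < e" "e < d"
  shows "set_integrable lborel {z. e < \<bar>x - z\<bar>} f"
    "(LINT z:{z. e < \<bar>x - z\<bar>}|lborel. f z) = I_far + I_mid + I_right
       + ((LINT z:{x-d<..<x-e}|lborel. h z) + (LINT z:{x+e<..<x+d}|lborel. h z))"
proof -
  have dd: "x + d < -1" using x_eq R_eq d_ge by auto
  note odd = odd_part_cancels[OF e]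
  have left: "set_integrable lborel {..<x-e} f
      \<and> (LINT z:{..<x-e}|lborel. f z) = I_far + (LINT z:{x-d<..<x-e}|lborel. f z)"
    using set_integral_einterval_split[of "-\<infinity>" "x-d" "ereal (x-e)" f] far_left_part(1) odd(1) e
    by (simp add: I_far_def)
  have outer: "set_integrable lborel {x+d<..} f \<and> (LINT z:{x+d<..}|lborel. f z) = I_mid + I_right"
    using set_integral_einterval_split[of "ereal (x+d)" "-1" \<infinity> f] middle_part(1) right_part(1) dd
    by (simp add: I_mid_def I_right_def)
  have right: "set_integrable lborel {x+e<..} f
      \<and> (LINT z:{x+e<..}|lborel. f z) = (LINT z:{x+e<..<x+d}|lborel. f z) + (I_mid + I_right)"
    using set_integral_einterval_split[of "ereal (x+e)" "x+d" \<infinity> f] odd(2) outer e by simp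
  have split: "{z. e < \<bar>x - z\<bar>} = {..<x-e} \<union> {x+e<..}" by auto
  have disjoint: "{..<x-e} \<inter> {x+e<..} = {}" using e by auto
  show "set_integrable lborel {z. e < \<bar>x - z\<bar>} f"
    unfolding split using left right by (intro set_integrable_Un) auto
  have "(LINT z:{z. e < \<bar>x - z\<bar>}|lborel. f z) = (LINT z:{..<x-e}|lborel. f z) + (LINT z:{x+e<..}|lborel. f z)"
    unfolding split using set_integral_Un[OF disjoint, of lborel f] left right by simp
  then show "(LINT z:{z. e < \<bar>x - z\<bar>}|lborel. f z) = I_far + I_mid + I_right
       + ((LINT z:{x-d<..<x-e}|lborel. h z) + (LINT z:{x+e<..<x+d}|lborel. h z))"
    using left right odd(3) by simp
qed

lemma h_annulus:
  assumes e: "0 < e" "e < d"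
  shows "(LINT z:{x-d<..<x-e}|lborel. h z) + (LINT z:{x+e<..<x+d}|lborel. h z)
    = H_left + H_right - ((LINT z:{x-e<..<x}|lborel. h z) + (LINT z:{x<..<x+e}|lborel. h z))"
proof -
  have il: "set_integrable lborel {x-d<..<x} h" and ir: "set_integrable lborel {x<..<x+d} h"
    using h_near_left(1)[of d] h_near_right(1)[of d] d_ge by simp_all
  have "H_left = (LINT z:{x-d<..<x-e}|lborel. h z) + (LINT z:{x-e<..<x}|lborel. h z)"
    using set_integral_einterval_split(2)[of "ereal (x-d)" "x-e" "ereal x" h] e
      set_integrable_subset[OF il] by (simp add: H_left_def subset_eq)
  moreover have "H_right = (LINT z:{x<..<x+e}|lborel. h z) + (LINT z:{x+e<..<x+d}|lborel. h z)"
    using set_integral_einterval_split(2)[of "ereal x" "x+e" "ereal (x+d)" h] e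
      set_integrable_subset[OF ir] by (simp add: H_right_def subset_eq)
  ultimately show ?thesis by simp
qed

lemma truncated_integral_limit:
  "((\<lambda>e. LINT z:{z. e < \<bar>x - z\<bar>}|lborel. f z) \<longlongrightarrow> pv_value) (at_right 0)"
proof -
  let ?C = "2 * M / (2 - 2*\<alpha>)"
  have "eventually (\<lambda>e. 0 < e \<and> e < d) (at_right 0)"
    using d_ge eventually_at_right_real[of 0 d] by simp
  then have close: "eventually (\<lambda>e. norm ((LINT z:{z. e < \<bar>x - z\<bar>}|lborel. f z) - pv_value)
      \<le> ?C * e powr (2 - 2*\<alpha>)) (at_right 0)"
  proof eventually_elim
    case (elim e)
    then have e: "0 < e" "e < d" by auto
    have "(LINT z:{z. e < \<bar>x - z\<bar>}|lborel. f z) - pv_value =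
        - ((LINT z:{x-e<..<x}|lborel. h z) + (LINT z:{x<..<x+e}|lborel. h z))"
      unfolding truncated_integral_split(2)[OF e] h_annulus[OF e] pv_value_def by simp
    moreover have "M * (e powr (2 - 2*\<alpha>) / (2 - 2*\<alpha>)) + M * (e powr (2 - 2*\<alpha>) / (2 - 2*\<alpha>))
        = ?C * e powr (2 - 2*\<alpha>)"
      by (simp add: field_simps)
    ultimately show ?case
      using h_near_left(2)[of e] h_near_right(2)[of e] e by (simp del: Groups.add_uminus_conv_diff)
  qed
  have "((\<lambda>e::real. e powr (2 - 2*\<alpha>)) \<longlongrightarrow> 0) (at_right 0)"
    using alpha_upper by (intro tendsto_zero_powrI) (auto intro!: tendsto_eq_intros simp: eventually_at_filter)
  from tendsto_mult_right_zero[OF this, of ?C]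
  have "((\<lambda>e. ?C * e powr (2 - 2*\<alpha>)) \<longlongrightarrow> 0) (at_right 0)" by simp
  then show ?thesis
    using Lim_null_comparison[OF close] by (simp add: Lim_null[symmetric])
qed

lemma right_part_asymptotics:
  "\<bar>I_right + R powr (-(2*\<alpha>)) / (2*\<alpha>)\<bar> \<le> (1 + 2*\<alpha>) / (2*\<alpha>) * err"
proof -
  have a0: "0 < 2*\<alpha>" using alpha_lower by simp
  have "R powr (-\<beta>) \<le> d powr (-\<beta>)" "(R-1) powr (-(2*\<alpha>)) \<le> d powr (-(2*\<alpha>))"
    using R_eq d_ge beta_pos alpha_lower by (auto intro!: powr_mono2')
  then have "R powr (-\<beta>) * (R-1) powr (-(2*\<alpha>)) \<le> d powr (-\<beta>) * d powr (-(2*\<alpha>))"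
    by (intro mult_mono) auto
  also have "\<dots> = err"
    unfolding err_def powr_add[symmetric] by (rule arg_cong[where f="\<lambda>e. d powr e"]) simp
  finally have main: "R powr (-\<beta>) * (R-1) powr (-(2*\<alpha>)) \<le> err" .
  have slope: "\<bar>-(2*\<alpha>) * t powr (-(2*\<alpha>)-1)\<bar> \<le> 2*\<alpha> * err" if "t \<in> {R-1..R}" for t
  proof -
    have "t powr (-(2*\<alpha>)-1) \<le> d powr (-(2*\<alpha>)-1)"
      using that R_eq d_ge alpha_lower by (intro powr_mono2') auto
    also have "\<dots> \<le> err"
      unfolding err_def using d_ge beta_upper by (intro powr_mono) auto
    finally show ?thesis using a0 by (simp add: abs_mult)
  qed
  have "\<bar>(R-1) powr (-(2*\<alpha>)) - R powr (-(2*\<alpha>))\<bar> \<le> 2*\<alpha> * err * \<bar>(R-1) - R\<bar>"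
    by (rule lipschitz_from_derivative_bound[OF _ slope])
      (use R_ge in \<open>auto intro!: derivative_eq_intros\<close>)
  then have shift: "\<bar>(R-1) powr (-(2*\<alpha>)) - R powr (-(2*\<alpha>))\<bar> \<le> 2*\<alpha> * err" by simp
  have "I_right + R powr (-(2*\<alpha>)) / (2*\<alpha>) =
      (R powr (-\<beta>) * (R-1) powr (-(2*\<alpha>)) - ((R-1) powr (-(2*\<alpha>)) - R powr (-(2*\<alpha>)))) / (2*\<alpha>)"
    using right_part(2) unfolding I_right_def
    by (simp add: algebra_simps add_divide_distrib diff_divide_distrib)
  moreover have "\<bar>R powr (-\<beta>) * (R-1) powr (-(2*\<alpha>)) - ((R-1) powr (-(2*\<alpha>)) - R powr (-(2*\<alpha>)))\<bar>
      \<le> (1 + 2*\<alpha>) * err"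
  proof -
    have "\<bar>R powr (-\<beta>) * (R-1) powr (-(2*\<alpha>)) - ((R-1) powr (-(2*\<alpha>)) - R powr (-(2*\<alpha>)))\<bar>
        \<le> \<bar>R powr (-\<beta>) * (R-1) powr (-(2*\<alpha>))\<bar> + \<bar>(R-1) powr (-(2*\<alpha>)) - R powr (-(2*\<alpha>))\<bar>"
      by (rule abs_triangle_ineq4)
    also have "\<dots> \<le> err + 2*\<alpha> * err"
      using main shift by (intro add_mono) auto
    finally show ?thesis by (simp add: algebra_simps)
  qed
  ultimately show ?thesis
    using a0 by (simp add: abs_divide divide_right_mono)
qed

definition "remainder_const = 1/(2*\<alpha>) + 1/(1-\<beta>) + 4/(2-2*\<alpha>) + (1+2*\<alpha>)/(2*\<alpha>)"

lemma pv_value_asymptotics: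
  "\<bar>pv_value + R powr (-(2*\<alpha>)) / (2*\<alpha>)\<bar> \<le> remainder_const * err"
proof -
  have a0: "0 < 2*\<alpha>" using alpha_lower by simp
  have far: "\<bar>I_far\<bar> \<le> err/(2*\<alpha>)"
  proof -
    have "R powr (-\<beta>) * d powr (-(2*\<alpha>)) \<le> d powr (-\<beta>) * d powr (-(2*\<alpha>))"
      using R_eq d_ge beta_pos by (intro mult_right_mono powr_mono2') auto
    also have "\<dots> = err"
      unfolding err_def powr_add[symmetric] by (rule arg_cong[where f="\<lambda>e. d powr e"]) simp
    finally have "R powr (-\<beta>) * d powr (-(2*\<alpha>)) / (2*\<alpha>) \<le> err/(2*\<alpha>)"
      using a0 by (intro divide_right_mono) auto
    then show ?thesis
      using far_left_part(2) unfolding I_far_def by simp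
  qed
  have mid: "\<bar>I_mid\<bar> \<le> err/(1-\<beta>)"
  proof -
    have "\<bar>I_mid\<bar> \<le> d powr (-(1+2*\<alpha>)) * ((d powr (1-\<beta>) - 1) / (1-\<beta>))"
      using middle_part(2) by (simp add: I_mid_def)
    also have "\<dots> \<le> d powr (-(1+2*\<alpha>)) * (d powr (1-\<beta>) / (1-\<beta>))"
      using beta_upper by (intro mult_left_mono divide_right_mono) auto
    also have "\<dots> = err/(1-\<beta>)"
    proof -
      have "d powr (-(1+2*\<alpha>)) * d powr (1-\<beta>) = err"
        unfolding err_def powr_add[symmetric] by (rule arg_cong[where f="\<lambda>e. d powr e"]) simp
      then show ?thesis by simp
    qed
    finally show ?thesis .
  qed
  have scale: "M * (d powr (2 - 2*\<alpha>) / (2 - 2*\<alpha>)) = 2*err/(2-2*\<alpha>)"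
  proof -
    have "d powr (-\<beta>-2) * d powr (2-2*\<alpha>) = err"
      unfolding err_def powr_add[symmetric] by (rule arg_cong[where f="\<lambda>e. d powr e"]) simp
    then show ?thesis unfolding M_def by simp
  qed
  have "0 < d" using d_ge by simp
  then have near: "\<bar>H_left\<bar> \<le> 2*err/(2-2*\<alpha>)" "\<bar>H_right\<bar> \<le> 2*err/(2-2*\<alpha>)"
    using h_near_left(2)[of d] h_near_right(2)[of d] unfolding H_left_def H_right_def scale by simp_all
  have "\<bar>pv_value + R powr (-(2*\<alpha>)) / (2*\<alpha>)\<bar>
      \<le> err/(2*\<alpha>) + err/(1-\<beta>) + 2*err/(2-2*\<alpha>) + 2*err/(2-2*\<alpha>) + (1 + 2*\<alpha>)/(2*\<alpha>) * err"
    using far mid near right_part_asymptotics unfolding pv_value_def by linarith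
  also have "\<dots> = remainder_const * err"
    unfolding remainder_const_def by (simp add: field_simps)
  finally show ?thesis .
qed

lemma frac_trunc_eq: "frac_trunc \<alpha> \<phi> x = (\<lambda>e. LINT z:{z. e < \<bar>x - z\<bar>}|lborel. f z)"
  by (rule ext) (simp add: frac_trunc_def f_def)

lemma pv_exists: "frac_pv_exists \<alpha> \<phi> x"
proof -
  have "set_integrable lborel {z. e < \<bar>x - z\<bar>} f" if e: "0 < e" for e
  proof (cases "e < d")
    case True
    then show ?thesis using truncated_integral_split(1) e by simp
  next
    case False
    have "0 < d/2" "d/2 < d" using d_ge by auto
    from truncated_integral_split(1)[OF this] show ?thesis
      by (rule set_integrable_subset) (use False d_ge in auto)
  qed
  moreover have "(\<lambda>z. (\<phi> x - \<phi> z) / \<bar>x - z\<bar> powr (1 + 2 * \<alpha>)) = f"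
    by (rule ext) (simp add: f_def)
  ultimately show ?thesis
    unfolding frac_pv_exists_def frac_trunc_eq using truncated_integral_limit by auto
qed

lemma frac_lap_eq: "frac_lap \<alpha> \<phi> x = frac_const \<alpha> * pv_value"
  unfolding frac_lap_def frac_trunc_eq
  using tendsto_Lim[OF trivial_limit_at_right_real truncated_integral_limit] by simp

lemma deriv_phi: "deriv \<phi> x = p"
proof -
  have "((\<lambda>z. (-z) powr (-\<beta>)) has_real_derivative \<beta> * (-x) powr (-\<beta>-1)) (at x)"
    using x_far by (auto intro!: derivative_eq_intros simp: algebra_simps)
  then have "(\<phi> has_real_derivative \<beta> * (-x) powr (-\<beta>-1)) (at x)"
    by (rule has_field_derivative_transform_within_open[where S="{..< -1}"])
      (use x_far in \<open>auto simp: phi_left\<close>)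
  from DERIV_imp_deriv[OF this] show ?thesis by (simp add: p_def R_def)
qed

lemma remainder_bound:
  "\<bar>frac_lap \<alpha> \<phi> x + c * deriv \<phi> x
           - (- frac_const \<alpha> / (2 * \<alpha> * \<bar>x\<bar> powr (2 * \<alpha>)) + c * \<beta> / \<bar>x\<bar> powr (\<beta> + 1))\<bar>
   \<le> (\<bar>frac_const \<alpha>\<bar> * remainder_const * 2 powr (\<beta> + 2*\<alpha>)) * \<bar>1 / \<bar>x\<bar> powr (\<beta> + 2 * \<alpha>)\<bar>"
proof -
  have ax: "\<bar>x\<bar> = R" using x_far by (simp add: R_def)
  have R0: "0 < R" using R_ge by simp
  have drift: "c * p = c * \<beta> / R powr (\<beta> + 1)"
  proof -
    have exponent: "-\<beta>-1 = -(\<beta>+1)" by simp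
    show ?thesis unfolding p_def exponent powr_minus_divide by simp
  qed
  have main: "- frac_const \<alpha> / (2 * \<alpha> * R powr (2 * \<alpha>)) = - (frac_const \<alpha> * (R powr (-(2*\<alpha>)) / (2*\<alpha>)))"
    using R0 alpha_lower by (simp add: powr_minus field_simps)
  have eq: "frac_lap \<alpha> \<phi> x + c * deriv \<phi> x
           - (- frac_const \<alpha> / (2 * \<alpha> * \<bar>x\<bar> powr (2 * \<alpha>)) + c * \<beta> / \<bar>x\<bar> powr (\<beta> + 1))
        = frac_const \<alpha> * (pv_value + R powr (-(2*\<alpha>)) / (2*\<alpha>))"
    unfolding frac_lap_eq deriv_phi ax drift[symmetric] main by (simp add: algebra_simps)
  have "err = inverse (R powr (\<beta>+2*\<alpha>) / 2 powr (\<beta>+2*\<alpha>))"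
    unfolding err_def d_def by (subst powr_minus) (subst powr_divide, use R0 in auto)
  also have "\<dots> = 2 powr (\<beta> + 2*\<alpha>) * \<bar>1 / R powr (\<beta>+2*\<alpha>)\<bar>"
    by (simp only: inverse_divide) simp
  finally have err: "err = 2 powr (\<beta> + 2*\<alpha>) * \<bar>1 / \<bar>x\<bar> powr (\<beta> + 2 * \<alpha>)\<bar>"
    unfolding ax .
  have "\<bar>frac_const \<alpha> * (pv_value + R powr (-(2*\<alpha>)) / (2*\<alpha>))\<bar> \<le> \<bar>frac_const \<alpha>\<bar> * (remainder_const * err)"
    unfolding abs_mult by (intro mult_left_mono pv_value_asymptotics) auto
  then show ?thesis unfolding eq err by (simp only: mult.assoc)
qed

end

theorem lemma2p2:
  fixes \<alpha> \<beta> c :: real and \<phi> :: "real \<Rightarrow> real"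
  assumes "1/2 < \<alpha>" "\<alpha> < 1" "0 < \<beta>" "\<beta> < 1"
    and "\<And>x. \<phi> x = (if x < -1 then \<bar>x\<bar> powr (- \<beta>) else 1)"
  shows "eventually (\<lambda>x. frac_pv_exists \<alpha> \<phi> x) at_bot
    \<and> (\<lambda>x. frac_lap \<alpha> \<phi> x + c * deriv \<phi> x
           - (- frac_const \<alpha> / (2 * \<alpha> * \<bar>x\<bar> powr (2 * \<alpha>)) + c * \<beta> / \<bar>x\<bar> powr (\<beta> + 1)))
      \<in> O[at_bot](\<lambda>x. 1 / \<bar>x\<bar> powr (\<beta> + 2 * \<alpha>))"
proof -
  have point: "far_left_point \<alpha> \<beta> x \<phi>" if "x \<le> -4" for x
    using assms that by unfold_locales auto
  have far: "eventually (\<lambda>x::real. x \<le> -4) at_bot" by (rule eventually_le_at_bot)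
  define K where "K = \<bar>frac_const \<alpha>\<bar> * far_left_point.remainder_const \<alpha> \<beta> * 2 powr (\<beta> + 2*\<alpha>)"
  have "eventually (\<lambda>x. frac_pv_exists \<alpha> \<phi> x) at_bot"
    using far by eventually_elim (rule far_left_point.pv_exists[OF point])
  moreover have "eventually (\<lambda>x. norm (frac_lap \<alpha> \<phi> x + c * deriv \<phi> x
           - (- frac_const \<alpha> / (2 * \<alpha> * \<bar>x\<bar> powr (2 * \<alpha>)) + c * \<beta> / \<bar>x\<bar> powr (\<beta> + 1)))
          \<le> K * norm (1 / \<bar>x\<bar> powr (\<beta> + 2 * \<alpha>))) at_bot"
    using far by eventually_elim
      (use far_left_point.remainder_bound[OF point] in \<open>simp only: K_def real_norm_def\<close>)
  ultimately show ?thesis by (auto intro: bigoI)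
qed

end
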